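(* Fix cylindric partitions $\alpha$ and $\beta$ on $\mathcal{C}_{k,n}$. There exists a bijection \[ \operatorname{CRSK}:\ \bigsqcup_{\substack{\mu\in\operatorname{Cylpar};\\ \mu\subseteq\alpha;\ \mu\subseteq\beta}} \operatorname{SSCT}(\alpha/\mu)\times\operatorname{SSCT}(\beta/\mu)\ \longrightarrow\ \bigsqcup_{\substack{\lambda\in\operatorname{Cylpar};\\ \alpha\subseteq\lambda;\ \beta\subseteq\lambda}} \operatorname{SSCT}(\lambda/\beta)\times\operatorname{SSCT}(\lambda/\alpha) \] such that for every $\mu\in\operatorname{Cylpar}$ with $\mu\subseteq\alpha$, $\mu\subseteq\beta$, every $T\in\operatorname{SSCT}(\alpha/\mu)$ and every $U\in\operatorname{SSCT}(\beta/\mu)$, if $\operatorname{CRSK}(((T,U),\mu))=((P,Q),\lambda)$ then $\operatorname{wt}(T)=\operatorname{wt}(P)$ and $\operatorname{wt}(U)=\operatorname{wt}(Q)$.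
   Context: Fix integers $n>k\ge 1$. A cylindric partition is a weakly decreasing sequence $(\lambda_m)_{m\in\mathbb Z}$ of integers with $\lambda_m=\lambda_{m+k}+n-k$ for all $m$; $\operatorname{Cylpar}$ is the set of cylindric partitions. A point $(x,y)\in\mathbb Z^2$ lies in plane row $x$ and plane column $y$, and lies in $\lambda$ if $y\le\lambda_x$. A box is an equivalence class of points modulo translation by integer multiples of $(-k,n-k)$ (so boxes are elements of the cylinder $\mathcal C_{k,n}=\mathbb Z^2/(-k,n-k)\mathbb Z$); $\pi$ is the projection from points to boxes, and a box lies in $\lambda$ iff its representatives do. We write $\mu\subseteq\lambda$ if $\mu_m\le\lambda_m$ for all $m$; then the boxes of $\lambda/\mu$ are the (finitely many) boxes lying in $\lambda$ but not in $\mu$. Fix a totally ordered alphabet $A$. A semistandard cylindric tableau of shape $\lambda/\mu$ ($\mu\subseteq\lambda$) is a map $R$ from the boxes of $\lambda/\mu$ to $A$ such that $R(\pi(x,y_1))\le R(\pi(x,y_2))$ whenever the points $(x,y_1),(x,y_2)$ lie in $\lambda$ but not in $\mu$ and $y_1<y_2$, and $R(\pi(x_1,y))<R(\pi(x_2,y))$ whenever $(x_1,y),(x_2,y)$ lie in $\lambda$ but not in $\mu$ and $x_1<x_2$; the pair $(\lambda,\mu)$ is part of the data of the tableau. $\operatorname{SSCT}(\lambda/\mu)$ denotes the set of such tableaux. The weight $\operatorname{wt}(R):A\to\mathbb N$ sends $a$ to the number of boxes whose entry is $a$. The disjoint union $\bigsqcup_{s\in S}T_s$ is the set of pairs $(t,s)$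 with $s\in S$, $t\in T_s$. *)

theory Defs
  imports Main
begin

definition is_cylpar :: "nat \<Rightarrow> nat \<Rightarrow> (int \<Rightarrow> int) \<Rightarrow> bool" where
  "is_cylpar k n lam \<longleftrightarrow>
     (\<forall>m. lam (m + 1) \<le> lam m) \<and> (\<forall>m. lam m = lam (m + int k) + int n - int k)"

definition cyl_subseteq :: "(int \<Rightarrow> int) \<Rightarrow> (int \<Rightarrow> int) \<Rightarrow> bool" where
  "cyl_subseteq mu lam \<longleftrightarrow> (\<forall>m. mu m \<le> lam m)"

definition in_shape :: "(int \<Rightarrow> int) \<Rightarrow> int \<times> int \<Rightarrow> bool" where
  "in_shape lam p \<longleftrightarrow> snd p \<le> lam (fst p)"

text \<open>Boxes: equivalence classes of points modulo integer multiples of (-k, n-k).\<close>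
type_synonym box = "(int \<times> int) set"

definition box_proj :: "nat \<Rightarrow> nat \<Rightarrow> int \<times> int \<Rightarrow> box" where
  "box_proj k n p = {(fst p - int k * t, snd p + (int n - int k) * t) | t. True}"

definition skew_points :: "(int \<Rightarrow> int) \<Rightarrow> (int \<Rightarrow> int) \<Rightarrow> (int \<times> int) set" where
  "skew_points lam mu = {p. in_shape lam p \<and> \<not> in_shape mu p}"

definition skew_boxes :: "nat \<Rightarrow> nat \<Rightarrow> (int \<Rightarrow> int) \<Rightarrow> (int \<Rightarrow> int) \<Rightarrow> box set" where
  "skew_boxes k n lam mu = box_proj k n ` skew_points lam mu"

type_synonym 'a cyltab = "(int \<Rightarrow> int) \<times> (int \<Rightarrow> int) \<times> (box \<Rightarrow> 'a option)"

definition SSCT :: "nat \<Rightarrow> nat \<Rightarrow> (int \<Rightarrow> int) \<Rightarrow> (int \<Rightarrow> int) \<Rightarrow> ('a::linorder) cyltab set" where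
  "SSCT k n lam mu = {(lam, mu, R) | R.
      dom R = skew_boxes k n lam mu \<and>
      (\<forall>x y1 y2. (x, y1) \<in> skew_points lam mu \<longrightarrow> (x, y2) \<in> skew_points lam mu \<longrightarrow> y1 < y2 \<longrightarrow>
          the (R (box_proj k n (x, y1))) \<le> the (R (box_proj k n (x, y2)))) \<and>
      (\<forall>x1 x2 y. (x1, y) \<in> skew_points lam mu \<longrightarrow> (x2, y) \<in> skew_points lam mu \<longrightarrow> x1 < x2 \<longrightarrow>
          the (R (box_proj k n (x1, y))) < the (R (box_proj k n (x2, y)))) }"

definition wt :: "('a::linorder) cyltab \<Rightarrow> 'a \<Rightarrow> nat" where
  "wt T a = card {b. snd (snd T) b = Some a}"

definition CRSK_domain :: "nat \<Rightarrow> nat \<Rightarrow> (int \<Rightarrow> int) \<Rightarrow> (int \<Rightarrow> int)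
    \<Rightarrow> ((('a::linorder) cyltab \<times> 'a cyltab) \<times> (int \<Rightarrow> int)) set" where
  "CRSK_domain k n \<alpha> \<beta> = {((T, U), mu) | T U mu.
      is_cylpar k n mu \<and> cyl_subseteq mu \<alpha> \<and> cyl_subseteq mu \<beta> \<and>
      T \<in> SSCT k n \<alpha> mu \<and> U \<in> SSCT k n \<beta> mu}"

definition CRSK_codomain :: "nat \<Rightarrow> nat \<Rightarrow> (int \<Rightarrow> int) \<Rightarrow> (int \<Rightarrow> int)
    \<Rightarrow> ((('a::linorder) cyltab \<times> 'a cyltab) \<times> (int \<Rightarrow> int)) set" where
  "CRSK_codomain k n \<alpha> \<beta> = {((P, Q), lam) | P Q lam.
      is_cylpar k n lam \<and> cyl_subseteq \<alpha> lam \<and> cyl_subseteq \<beta> lam \<and>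
      P \<in> SSCT k n lam \<beta> \<and> Q \<in> SSCT k n lam \<alpha>}"

end

theory Submission
  imports Defs "HOL-Library.Equipollence"
begin

(* Peeling off the boxes of the least letter, then of the next one, and so on, identifies a
  semistandard cylindric tableau of shape lam/mu and weight w with a chain mu = l_0 <= l_1 <= ... <= l_r = lam
  of cylindric partitions in which each l_i/l_(i-1) is a horizontal strip with w(a_i) boxes.
  A pair (T, U) of the domain is then a walk from alpha down to mu and up to beta, a pair (P, Q)
  of the codomain a walk from alpha up to lam and down to beta, with the same strip sizes.
  The local rule lam_m = max(a_m, b_m) + min(a_(m-1), b_(m-1)) - mu_(m-1) of the growth diagram is a
  bijection between the two ways of completing a square of strips of prescribed sizes, and it
  preserves periodicity, so it lets every down-step be moved past every up-step. Hence the fibres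
  of the weight maps on both sides are equipollent, and choosing a bijection on each fibre gives
  the weight-preserving bijection. *)

lemma sum_periodic_shift_one:
  fixes g :: "int \<Rightarrow> 'b::comm_monoid_add"
  assumes periodic: "\<And>x. g (x + c) = g x" and "0 < c"
  shows "(\<Sum>x\<in>{0..<c}. g (x + 1)) = (\<Sum>x\<in>{0..<c}. g x)"
proof -
  have "(\<Sum>x\<in>{0..<c}. g (x + 1)) = (\<Sum>x\<in>{1..<c + 1}. g x)"
    by (rule sum.reindex_bij_witness[where i="\<lambda>x. x - 1" and j="\<lambda>x. x + 1"]) auto
  also have "{1..<c + 1} = insert c {1..<c}" using \<open>0 < c\<close> by auto
  also have "{0..<c} = insert 0 {1..<c}" using \<open>0 < c\<close> by auto
  ultimately show ?thesis using periodic[of 0] by (simp add: add.commute)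
qed

lemma sum_periodic_shift_minus_one:
  fixes g :: "int \<Rightarrow> 'b::comm_monoid_add"
  assumes "\<And>x. g (x + c) = g x" and "0 < c"
  shows "(\<Sum>x\<in>{0..<c}. g (x - 1)) = (\<Sum>x\<in>{0..<c}. g x)"
proof -
  have "g (x + c - 1) = g (x - 1)" for x using assms(1)[of "x - 1"] by (simp add: algebra_simps)
  then show ?thesis using sum_periodic_shift_one[of "\<lambda>x. g (x - 1)" c] assms(2) by simp
qed

lemma threshold_unique:
  fixes v1 v2 :: int
  assumes "lo \<le> v1" "v1 \<le> hi" "lo \<le> v2" "v2 \<le> hi"
    and "\<And>y. lo < y \<Longrightarrow> y \<le> hi \<Longrightarrow> P y \<longleftrightarrow> y \<le> v1"
    and "\<And>y. lo < y \<Longrightarrow> y \<le> hi \<Longrightarrow> P y \<longleftrightarrow> y \<le> v2"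
  shows "v1 = v2"
proof (rule ccontr)
  assume "v1 \<noteq> v2"
  then consider "v1 < v2" | "v2 < v1" by linarith
  then show False
  proof cases
    case 1 then show False using assms(5,6)[of v2] assms(1-4) by auto
  next
    case 2 then show False using assms(5,6)[of v1] assms(1-4) by auto
  qed
qed

lemma Cons_set_eqpoll_Sigma: "{c # r | c r. P c \<and> r \<in> A c} \<approx> Sigma (Collect P) A"
proof -
  have "{c # r | c r. P c \<and> r \<in> A c} = (\<lambda>(c, r). c # r) ` Sigma (Collect P) A" by auto
  moreover have "inj_on (\<lambda>(c, r). c # r) (Sigma (Collect P) A)" by (auto simp: inj_on_def)
  ultimately show ?thesis by (simp add: inj_on_image_eqpoll_self)
qed

lemma Sigma_eqpoll_cong_id: "(\<And>x. x \<in> A \<Longrightarrow> B x \<approx> C x) \<Longrightarrow> Sigma A B \<approx> Sigma A C"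
  using Sigma_eqpoll_cong[of id A A B C] by simp

lemma Sigma_cong_nonempty:
  assumes "\<And>x. B x \<noteq> {} \<Longrightarrow> x \<in> A \<longleftrightarrow> x \<in> A'"
  shows "Sigma A B = Sigma A' B"
  using assms by auto

lemma bij_betw_if_fibres_eqpoll:
  assumes "\<And>y. {x \<in> A. f x = y} \<approx> {x \<in> B. g x = y}"
  shows "\<exists>h. bij_betw h A B \<and> (\<forall>x\<in>A. g (h x) = f x)"
proof -
  obtain H where H: "\<And>y. bij_betw (H y) {x \<in> A. f x = y} {x \<in> B. g x = y}"
    using assms unfolding eqpoll_def by metis
  define h where "h x = H (f x) x" for x
  have h: "h x \<in> B" "g (h x) = f x" if "x \<in> A" for x
    using bij_betwE[OF H[of "f x"]] that unfolding h_def by auto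
  have "inj_on h A"
  proof (rule inj_onI)
    fix x x' assume "x \<in> A" "x' \<in> A" "h x = h x'"
    moreover from this have "f x = f x'" using h(2) by metis
    ultimately show "x = x'" using bij_betw_imp_inj_on[OF H[of "f x"]] unfolding h_def inj_on_def by auto
  qed
  moreover have "B \<subseteq> h ` A"
  proof
    fix z assume "z \<in> B"
    then have "z \<in> H (g z) ` {x \<in> A. f x = g z}" using bij_betw_imp_surj_on[OF H[of "g z"]] by auto
    then obtain x where "x \<in> A" "f x = g z" "z = H (g z) x" by auto
    then show "z \<in> h ` A" unfolding h_def by (auto intro!: image_eqI[of _ _ x])
  qed
  ultimately have "bij_betw h A B" using h(1) by (auto simp: bij_betw_def)
  then show ?thesis using h(2) by blast
qed

datatype strip_step = Up nat | Down nat

definition fill :: "'b set \<Rightarrow> 'a \<Rightarrow> ('b \<Rightarrow> 'a option) \<Rightarrow> 'b \<Rightarrow> 'a option" where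
  "fill S a R = (\<lambda>b. if b \<in> S then Some a else R b)"

definition tableau_pair_wt :: "(('a::linorder) cyltab \<times> 'a cyltab) \<times> (int \<Rightarrow> int) \<Rightarrow> ('a \<Rightarrow> nat) \<times> ('a \<Rightarrow> nat)" where
  "tableau_pair_wt = (\<lambda>((T, U), _). (wt T, wt U))"

locale cylinder =
  fixes k n :: nat
  assumes k_pos: "0 < k"
begin

abbreviation cylpar :: "(int \<Rightarrow> int) \<Rightarrow> bool" where
  "cylpar \<equiv> is_cylpar k n"

abbreviation col_shift :: int where
  "col_shift \<equiv> int n - int k"

lemma cylparI:
  assumes "\<And>m. l (m + 1) \<le> l m" and "\<And>m. l (m + int k) = l m - col_shift"
  shows "cylpar l"
  unfolding is_cylpar_def using assms by (metis add.commute add_diff_cancel_left diff_add_cancel diff_diff_eq2)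

lemma cylpar_step: "cylpar l \<Longrightarrow> l (m + 1) \<le> l m"
  unfolding is_cylpar_def by blast

lemma cylpar_period: "cylpar l \<Longrightarrow> l (m + int k) = l m - col_shift"
  unfolding is_cylpar_def by (simp add: algebra_simps)

lemma cylpar_periods: assumes "cylpar l" shows "l (m + int k * t) = l m - col_shift * t"
proof (induction t rule: int_induct[where k=0])
  case (step1 i)
  then show ?case using cylpar_period[OF assms, of "m + int k * i"] by (simp add: algebra_simps)
next
  case (step2 i)
  then show ?case using cylpar_period[OF assms, of "m + int k * (i - 1)"] by (simp add: algebra_simps)
qed simp

lemma cylpar_antimono: assumes "cylpar l" "m \<le> m'" shows "l m' \<le> l m"
  using assms(2)
proof (induction m' rule: int_ge_induct)
  case (step i) then show ?case using cylpar_step[OF assms(1), of i] by linarith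
qed simp

lemma box_proj_eq_iff:
  "box_proj k n p = box_proj k n q \<longleftrightarrow> (\<exists>t. q = (fst p - int k * t, snd p + col_shift * t))"
proof
  assume "box_proj k n p = box_proj k n q"
  moreover have "q \<in> box_proj k n q" unfolding box_proj_def by (auto intro: exI[of _ 0])
  ultimately show "\<exists>t. q = (fst p - int k * t, snd p + col_shift * t)" unfolding box_proj_def by auto
next
  assume "\<exists>t. q = (fst p - int k * t, snd p + col_shift * t)"
  then obtain t where q: "q = (fst p - int k * t, snd p + col_shift * t)" by blast
  have "z \<in> box_proj k n q" if z: "z \<in> box_proj k n p" for z
  proof -
    obtain s where "z = (fst p - int k * s, snd p + col_shift * s)"
      using z unfolding box_proj_def by auto
    then show ?thesis unfolding box_proj_def using q by (auto intro!: exI[of _ "s - t"] simp: algebra_simps)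
  qed
  moreover have "z \<in> box_proj k n p" if z: "z \<in> box_proj k n q" for z
  proof -
    obtain s where "z = (fst q - int k * s, snd q + col_shift * s)"
      using z unfolding box_proj_def by auto
    then show ?thesis unfolding box_proj_def using q by (auto intro!: exI[of _ "s + t"] simp: algebra_simps)
  qed
  ultimately show "box_proj k n p = box_proj k n q" by blast
qed

lemma skew_points_iff [simp]: "(x, y) \<in> skew_points l m \<longleftrightarrow> m x < y \<and> y \<le> l x"
  unfolding skew_points_def in_shape_def by auto

lemma skew_points_translate:
  assumes "cylpar l" "cylpar m"
  shows "(x - int k * t, y + col_shift * t) \<in> skew_points l m \<longleftrightarrow> (x, y) \<in> skew_points l m"
  using cylpar_periods[OF assms(1), of x "-t"] cylpar_periods[OF assms(2), of x "-t"] by auto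

lemma box_in_skew_boxes_iff:
  assumes "cylpar l" "cylpar m"
  shows "box_proj k n p \<in> skew_boxes k n l m \<longleftrightarrow> p \<in> skew_points l m"
proof
  assume "box_proj k n p \<in> skew_boxes k n l m"
  then obtain q where q: "q \<in> skew_points l m" "box_proj k n q = box_proj k n p"
    unfolding skew_boxes_def by auto
  then obtain t where "p = (fst q - int k * t, snd q + col_shift * t)" using box_proj_eq_iff by blast
  then show "p \<in> skew_points l m" using skew_points_translate[OF assms, of "fst q" t "snd q"] q(1) by simp
qed (simp add: skew_boxes_def)

lemma skew_points_union:
  assumes "\<forall>x. m x \<le> v x" "\<forall>x. v x \<le> l x"
  shows "skew_points l m = skew_points v m \<union> skew_points l v"
proof -
  have "p \<in> skew_points l m \<longleftrightarrow> p \<in> skew_points v m \<union> skew_points l v" for p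
    using assms[rule_format, of "fst p"] by (cases p) auto
  then show ?thesis by blast
qed

lemma skew_boxes_union:
  assumes "\<forall>x. m x \<le> v x" "\<forall>x. v x \<le> l x"
  shows "skew_boxes k n l m = skew_boxes k n v m \<union> skew_boxes k n l v"
  unfolding skew_boxes_def skew_points_union[OF assms] by blast

lemma skew_boxes_disjoint:
  assumes "cylpar l" "cylpar v" "cylpar m"
  shows "skew_boxes k n l v \<inter> skew_boxes k n v m = {}"
proof -
  have "p \<notin> skew_points v m" if "p \<in> skew_points l v" for p
    using that by (cases p) auto
  then show ?thesis using box_in_skew_boxes_iff[OF assms(2,3)] unfolding skew_boxes_def by blast
qed

text \<open>Every box has exactly one representative in the plane rows 0, ..., k - 1.\<close>

definition fundamental_points :: "(int \<Rightarrow> int) \<Rightarrow> (int \<Rightarrow> int) \<Rightarrow> (int \<times> int) set" where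
  "fundamental_points l m = (SIGMA x:{0..<int k}. {m x<..l x})"

lemma box_proj_mod: "box_proj k n (x, y) = box_proj k n (x mod int k, y + col_shift * (x div int k))"
  unfolding box_proj_eq_iff
  by (auto intro!: exI[of _ "x div int k"] simp: algebra_simps minus_mod_eq_mult_div[symmetric])

lemma skew_boxes_eq_image_fundamental:
  assumes "cylpar l" "cylpar m"
  shows "skew_boxes k n l m = box_proj k n ` fundamental_points l m"
proof
  show "skew_boxes k n l m \<subseteq> box_proj k n ` fundamental_points l m"
  proof
    fix b assume "b \<in> skew_boxes k n l m"
    then obtain x y where xy: "(x, y) \<in> skew_points l m" "b = box_proj k n (x, y)"
      unfolding skew_boxes_def by auto
    let ?p = "(x mod int k, y + col_shift * (x div int k))"
    have b: "b = box_proj k n ?p" using xy(2) box_proj_mod by simp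
    then have "?p \<in> skew_points l m"
      using xy box_in_skew_boxes_iff[OF assms] by (metis skew_boxes_def image_eqI)
    then have "?p \<in> fundamental_points l m"
      unfolding fundamental_points_def using k_pos by auto
    then show "b \<in> box_proj k n ` fundamental_points l m" using b by blast
  qed
qed (auto simp: fundamental_points_def skew_boxes_def)

lemma inj_on_box_proj_fundamental: "inj_on (box_proj k n) (fundamental_points l m)"
proof (rule inj_onI)
  fix p q assume p: "p \<in> fundamental_points l m" and q: "q \<in> fundamental_points l m"
    and "box_proj k n p = box_proj k n q"
  then obtain t where t: "q = (fst p - int k * t, snd p + col_shift * t)" using box_proj_eq_iff by blast
  have "0 \<le> fst p" "fst p < int k" "0 \<le> fst q" "fst q < int k"
    using p q unfolding fundamental_points_def by auto
  then have "\<bar>int k * t\<bar> < int k" using t by auto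
  then have "t = 0" using k_pos by (simp add: abs_mult)
  then show "p = q" using t by simp
qed

lemma finite_skew_boxes: "cylpar l \<Longrightarrow> cylpar m \<Longrightarrow> finite (skew_boxes k n l m)"
  by (simp add: skew_boxes_eq_image_fundamental fundamental_points_def)

definition skew_size :: "(int \<Rightarrow> int) \<Rightarrow> (int \<Rightarrow> int) \<Rightarrow> int" where
  "skew_size l m = (\<Sum>x\<in>{0..<int k}. l x - m x)"

lemma card_skew_boxes:
  assumes "cylpar l" "cylpar m" "\<forall>x. m x \<le> l x"
  shows "int (card (skew_boxes k n l m)) = skew_size l m"
proof -
  have "card (skew_boxes k n l m) = card (fundamental_points l m)"
    unfolding skew_boxes_eq_image_fundamental[OF assms(1,2)] by (rule card_image[OF inj_on_box_proj_fundamental])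
  also have "\<dots> = (\<Sum>x\<in>{0..<int k}. nat (l x - m x))"
    unfolding fundamental_points_def by (subst card_SigmaI) auto
  finally show ?thesis unfolding skew_size_def using assms(3) by simp
qed

text \<open>For cylindric partitions this says that r/v is a horizontal strip: no two of its boxes
  lie in the same plane column.\<close>

definition interlaces :: "(int \<Rightarrow> int) \<Rightarrow> (int \<Rightarrow> int) \<Rightarrow> bool" where
  "interlaces v r \<longleftrightarrow> (\<forall>m. v m \<le> r m \<and> r (m + 1) \<le> v m)"

definition hstrip :: "nat \<Rightarrow> (int \<Rightarrow> int) \<Rightarrow> (int \<Rightarrow> int) \<Rightarrow> bool" where
  "hstrip p v r \<longleftrightarrow> cylpar v \<and> cylpar r \<and> interlaces v r \<and> card (skew_boxes k n r v) = p"

lemma hstrip_iff_skew_size: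
  "hstrip p v r \<longleftrightarrow> cylpar v \<and> cylpar r \<and> interlaces v r \<and> int p = skew_size r v"
  unfolding hstrip_def interlaces_def using card_skew_boxes[of r v] by auto

lemma hstrip_subseteq: "hstrip p v r \<Longrightarrow> cyl_subseteq v r"
  unfolding hstrip_def interlaces_def cyl_subseteq_def by blast

definition growth_below :: "(int \<Rightarrow> int) \<Rightarrow> (int \<Rightarrow> int) \<Rightarrow> nat \<Rightarrow> nat \<Rightarrow> (int \<Rightarrow> int) set" where
  "growth_below a b p q = {u. hstrip p u a \<and> hstrip q u b}"

definition growth_above :: "(int \<Rightarrow> int) \<Rightarrow> (int \<Rightarrow> int) \<Rightarrow> nat \<Rightarrow> nat \<Rightarrow> (int \<Rightarrow> int) set" where
  "growth_above a b p q = {l. hstrip p b l \<and> hstrip q a l}"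

definition grow :: "(int \<Rightarrow> int) \<Rightarrow> (int \<Rightarrow> int) \<Rightarrow> (int \<Rightarrow> int) \<Rightarrow> (int \<Rightarrow> int)" where
  "grow a b u = (\<lambda>m. max (a m) (b m) + min (a (m - 1)) (b (m - 1)) - u (m - 1))"

definition shrink :: "(int \<Rightarrow> int) \<Rightarrow> (int \<Rightarrow> int) \<Rightarrow> (int \<Rightarrow> int) \<Rightarrow> (int \<Rightarrow> int)" where
  "shrink a b l = (\<lambda>m. min (a m) (b m) + max (a (m + 1)) (b (m + 1)) - l (m + 1))"

lemma grow_commute: "grow a b = grow b a"
  unfolding grow_def by (simp add: max.commute min.commute)

lemma shrink_commute: "shrink a b = shrink b a"
  unfolding shrink_def by (simp add: max.commute min.commute)

lemma shrink_grow: "shrink a b (grow a b u) = u"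
  unfolding shrink_def grow_def by simp

lemma grow_shrink: "grow a b (shrink a b l) = l"
  unfolding shrink_def grow_def by simp

lemma skew_size_grow:
  assumes "cylpar a" "cylpar b" "cylpar u"
  shows "skew_size (grow a b u) b = skew_size a u"
proof -
  let ?gain = "\<lambda>y. min (a y) (b y) - u y"
  have "?gain (x + int k) = ?gain x" for x
    using cylpar_period[OF assms(1)] cylpar_period[OF assms(2)] cylpar_period[OF assms(3)]
    by (simp add: min_diff_distrib_left)
  then have "(\<Sum>x\<in>{0..<int k}. ?gain (x - 1)) = (\<Sum>x\<in>{0..<int k}. ?gain x)"
    using k_pos by (intro sum_periodic_shift_minus_one) auto
  note shifted = this
  have "skew_size (grow a b u) b = (\<Sum>x\<in>{0..<int k}. (max (a x) (b x) - b x) + ?gain (x - 1))"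
    unfolding skew_size_def grow_def by (simp add: algebra_simps)
  also have "\<dots> = (\<Sum>x\<in>{0..<int k}. max (a x) (b x) - b x) + (\<Sum>x\<in>{0..<int k}. ?gain x)"
    unfolding sum.distrib shifted ..
  also have "\<dots> = skew_size a u"
    unfolding skew_size_def sum.distrib[symmetric] by (rule sum.cong) (auto simp: max_def min_def)
  finally show ?thesis .
qed

lemma skew_size_shrink:
  assumes "cylpar a" "cylpar b" "cylpar l"
  shows "skew_size a (shrink a b l) = skew_size l b"
proof -
  let ?excess = "\<lambda>y. l y - max (a y) (b y)"
  have "?excess (x + int k) = ?excess x" for x
    using cylpar_period[OF assms(1)] cylpar_period[OF assms(2)] cylpar_period[OF assms(3)]
    by (simp add: max_diff_distrib_left)
  then have shifted: "(\<Sum>x\<in>{0..<int k}. ?excess (x + 1)) = (\<Sum>x\<in>{0..<int k}. ?excess x)"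
    using k_pos by (intro sum_periodic_shift_one) auto
  have "skew_size a (shrink a b l) = (\<Sum>x\<in>{0..<int k}. (a x - min (a x) (b x)) + ?excess (x + 1))"
    unfolding skew_size_def shrink_def by (simp add: algebra_simps)
  also have "\<dots> = (\<Sum>x\<in>{0..<int k}. a x - min (a x) (b x)) + (\<Sum>x\<in>{0..<int k}. ?excess x)"
    unfolding sum.distrib shifted ..
  also have "\<dots> = skew_size l b"
    unfolding skew_size_def sum.distrib[symmetric] by (rule sum.cong) (auto simp: max_def min_def)
  finally show ?thesis .
qed

lemma grow_mem_growth_above:
  assumes "u \<in> growth_below a b p q"
  shows "grow a b u \<in> growth_above a b p q"
proof -
  have strips: "hstrip p u a" "hstrip q u b" using assms unfolding growth_below_def by auto
  then have cyl: "cylpar a" "cylpar b" "cylpar u" unfolding hstrip_def by auto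
  have "u m \<le> a m" "a (m + 1) \<le> u m" "u m \<le> b m" "b (m + 1) \<le> u m" for m
    using strips unfolding hstrip_def interlaces_def by auto
  then have above: "max (a m) (b m) \<le> grow a b u m" and below: "grow a b u (m + 1) \<le> min (a m) (b m)" for m
    unfolding grow_def by (fastforce simp: max_def min_def)+
  have "grow a b u (m + int k) = grow a b u m - col_shift" for m
  proof -
    have shift: "m + int k - 1 = (m - 1) + int k" by simp
    show ?thesis unfolding grow_def shift
      cylpar_period[OF cyl(1)] cylpar_period[OF cyl(2)] cylpar_period[OF cyl(3)]
      by (simp add: max_def min_def)
  qed
  moreover have "grow a b u (m + 1) \<le> grow a b u m" for m
    using above[of m] below[of m] by simp
  ultimately have "cylpar (grow a b u)" by (intro cylparI)
  moreover have "interlaces a (grow a b u)" "interlaces b (grow a b u)"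
    unfolding interlaces_def using above below by (meson max.bounded_iff min.bounded_iff)+
  moreover have "skew_size (grow a b u) b = skew_size a u" "skew_size (grow a b u) a = skew_size b u"
    using skew_size_grow[OF cyl] skew_size_grow[OF cyl(2,1,3)] grow_commute by metis+
  ultimately show ?thesis
    using strips unfolding growth_above_def hstrip_iff_skew_size by auto
qed

lemma shrink_mem_growth_below:
  assumes "l \<in> growth_above a b p q"
  shows "shrink a b l \<in> growth_below a b p q"
proof -
  have strips: "hstrip p b l" "hstrip q a l" using assms unfolding growth_above_def by auto
  then have cyl: "cylpar a" "cylpar b" "cylpar l" unfolding hstrip_def by auto
  have "a m \<le> l m" "l (m + 1) \<le> a m" "b m \<le> l m" "l (m + 1) \<le> b m" for m
    using strips unfolding hstrip_def interlaces_def by auto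
  then have below: "shrink a b l m \<le> min (a m) (b m)" and above: "max (a (m + 1)) (b (m + 1)) \<le> shrink a b l m" for m
    unfolding shrink_def by (fastforce simp: max_def min_def)+
  have "shrink a b l (m + int k) = shrink a b l m - col_shift" for m
  proof -
    have shift: "m + int k + 1 = (m + 1) + int k" by simp
    show ?thesis unfolding shrink_def shift
      cylpar_period[OF cyl(1)] cylpar_period[OF cyl(2)] cylpar_period[OF cyl(3)]
      by (simp add: max_def min_def)
  qed
  moreover have "shrink a b l (m + 1) \<le> shrink a b l m" for m
    using above[of m] below[of "m + 1"] by simp
  ultimately have "cylpar (shrink a b l)" by (intro cylparI)
  moreover have "interlaces (shrink a b l) a" "interlaces (shrink a b l) b"
    unfolding interlaces_def using above below by (meson max.bounded_iff min.bounded_iff)+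
  moreover have "skew_size a (shrink a b l) = skew_size l b" "skew_size b (shrink a b l) = skew_size l a"
    using skew_size_shrink[OF cyl] skew_size_shrink[OF cyl(2,1,3)] shrink_commute by metis+
  ultimately show ?thesis
    using strips unfolding growth_below_def hstrip_iff_skew_size by auto
qed

fun step_rel :: "strip_step \<Rightarrow> (int \<Rightarrow> int) \<Rightarrow> (int \<Rightarrow> int) \<Rightarrow> bool" where
  "step_rel (Up p) x y = hstrip p x y"
| "step_rel (Down p) x y = hstrip p y x"

text \<open>The walks from a to b in the graph of horizontal strips with the prescribed sequence of steps,
  each recorded by the list of the partitions it visits after a.\<close>

fun walks :: "strip_step list \<Rightarrow> (int \<Rightarrow> int) \<Rightarrow> (int \<Rightarrow> int) \<Rightarrow> (int \<Rightarrow> int) list set" where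
  "walks [] a b = (if a = b then {[]} else {})"
| "walks (s # w) a b = {c # r | c r. step_rel s a c \<and> r \<in> walks w c b}"

lemma walks_length_last: "r \<in> walks w a b \<Longrightarrow> length r = length w \<and> last (a # r) = b"
  by (induction w arbitrary: a r) (auto split: if_splits)

lemma walks_cylpar_iff: "r \<in> walks w a b \<Longrightarrow> cylpar a \<longleftrightarrow> cylpar b"
proof (induction w arbitrary: a r)
  case (Cons s w)
  then obtain c r' where "step_rel s a c" "r' \<in> walks w c b" by auto
  moreover have "cylpar a \<and> cylpar c" using \<open>step_rel s a c\<close> by (cases s) (auto simp: hstrip_def)
  ultimately show ?case using Cons.IH by blast
qed (auto split: if_splits)

lemma walks_Up_subseteq: "r \<in> walks (map Up ps) a b \<Longrightarrow> cyl_subseteq a b"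
proof (induction ps arbitrary: a r)
  case (Cons p ps)
  then obtain c r' where "hstrip p a c" "r' \<in> walks (map Up ps) c b" by auto
  then show ?case using Cons.IH hstrip_subseteq unfolding cyl_subseteq_def by (meson order_trans)
qed (auto split: if_splits simp: cyl_subseteq_def)

lemma walks_Cons_eqpoll: "walks (s # w) a b \<approx> (SIGMA c:{c. step_rel s a c}. walks w c b)"
  by (simp only: walks.simps) (rule Cons_set_eqpoll_Sigma)

lemma walks_Cons_eqpoll_cong:
  assumes "\<And>c. walks w c b \<approx> walks w' c b"
  shows "walks (s # w) a b \<approx> walks (s # w') a b"
proof -
  have "walks (s # w) a b \<approx> (SIGMA c:{c. step_rel s a c}. walks w c b)" by (rule walks_Cons_eqpoll)
  also have "\<dots> \<approx> (SIGMA c:{c. step_rel s a c}. walks w' c b)" by (rule Sigma_eqpoll_cong_id) (rule assms)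
  also have "\<dots> \<approx> walks (s # w') a b" by (rule eqpoll_sym, rule walks_Cons_eqpoll)
  finally show ?thesis .
qed

lemma walks_swap_Down_Up_head: "walks (Down p # Up q # v) a b \<approx> walks (Up q # Down p # v) a b"
proof -
  have below: "walks (Down p # Up q # v) a b
      = {c # z # r | c z r. c \<in> growth_below a z p q \<and> r \<in> walks v z b}"
    unfolding growth_below_def by auto
  have above: "walks (Up q # Down p # v) a b
      = {c # z # r | c z r. c \<in> growth_above a z p q \<and> r \<in> walks v z b}"
    unfolding growth_above_def by auto
  show ?thesis unfolding below above eqpoll_iff_bijections
    by (intro exI[of _ "\<lambda>r. grow a (hd (tl r)) (hd r) # tl r"] exI[of _ "\<lambda>r. shrink a (hd (tl r)) (hd r) # tl r"])
      (auto simp: grow_mem_growth_above shrink_mem_growth_below grow_shrink shrink_grow)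
qed

lemma walks_swap_Down_Up: "walks (u @ Down p # Up q # v) a b \<approx> walks (u @ Up q # Down p # v) a b"
proof (induction u arbitrary: a)
  case Nil then show ?case using walks_swap_Down_Up_head by simp
next
  case (Cons s u) then show ?case by (simp only: append_Cons) (rule walks_Cons_eqpoll_cong)
qed

lemma walks_Down_Ups_commute:
  "walks (u @ Down p # map Up qs @ v) a b \<approx> walks (u @ map Up qs @ Down p # v) a b"
proof (induction qs arbitrary: u)
  case (Cons q qs)
  have "walks (u @ Down p # map Up (q # qs) @ v) a b \<approx> walks ((u @ [Up q]) @ Down p # map Up qs @ v) a b"
    using walks_swap_Down_Up[of u p q "map Up qs @ v"] by simp
  also have "\<dots> \<approx> walks (u @ map Up (q # qs) @ Down p # v) a b"
    using Cons.IH[of "u @ [Up q]"] by simp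
  finally show ?case .
qed simp

lemma walks_Downs_Ups_commute:
  "walks (u @ map Down ps @ map Up qs @ v) a b \<approx> walks (u @ map Up qs @ map Down ps @ v) a b"
proof (induction ps arbitrary: u)
  case (Cons p ps)
  have "walks (u @ map Down (p # ps) @ map Up qs @ v) a b \<approx> walks ((u @ [Down p]) @ map Up qs @ map Down ps @ v) a b"
    using Cons.IH[of "u @ [Down p]"] by simp
  also have "\<dots> \<approx> walks (u @ map Up qs @ map Down (p # ps) @ v) a b"
    using walks_Down_Ups_commute[of u p qs "map Down ps @ v"] by simp
  finally show ?case .
qed simp

lemma walks_append:
  "walks (u @ v) a b = (\<lambda>(c, r1, r2). r1 @ r2) ` (SIGMA c:UNIV. walks u a c \<times> walks v c b)"
proof (induction u arbitrary: a)
  case Nil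
  have "(SIGMA c:UNIV. walks [] a c \<times> walks v c b) = (\<lambda>r. (a, [], r)) ` walks v a b"
    by (auto split: if_splits)
  then show ?case by (simp add: image_image)
next
  case (Cons s u)
  show ?case
  proof (rule set_eqI, rule iffI)
    fix x assume "x \<in> walks ((s # u) @ v) a b"
    then obtain c r where x: "x = c # r" "step_rel s a c" "r \<in> walks (u @ v) c b" by auto
    then obtain d r1 r2 where "r = r1 @ r2" "r1 \<in> walks u c d" "r2 \<in> walks v d b"
      using Cons.IH by auto
    then show "x \<in> (\<lambda>(c, r1, r2). r1 @ r2) ` (SIGMA c:UNIV. walks (s # u) a c \<times> walks v c b)"
      using x by (intro image_eqI[where x="(d, c # r1, r2)"]) auto
  next
    fix x assume "x \<in> (\<lambda>(c, r1, r2). r1 @ r2) ` (SIGMA c:UNIV. walks (s # u) a c \<times> walks v c b)"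
    then obtain y where "y \<in> (SIGMA c:UNIV. walks (s # u) a c \<times> walks v c b)" "x = (\<lambda>(c, r1, r2). r1 @ r2) y"
      by blast
    then obtain d r1 r2 where x: "x = r1 @ r2" "r1 \<in> walks (s # u) a d" "r2 \<in> walks v d b"
      by (cases y) (fastforce simp del: walks.simps)
    then obtain c r where r1: "r1 = c # r" "step_rel s a c" "r \<in> walks u c d" by auto
    have "r @ r2 \<in> walks (u @ v) c b"
      unfolding Cons.IH using r1 x by (intro image_eqI[where x="(d, r, r2)"]) auto
    then show "x \<in> walks ((s # u) @ v) a b" using x r1 by auto
  qed
qed

lemma walks_append_eqpoll: "walks (u @ v) a b \<approx> (SIGMA c:UNIV. walks u a c \<times> walks v c b)"
proof -
  have "inj_on (\<lambda>(c, r1, r2). r1 @ r2) (SIGMA c:UNIV. walks u a c \<times> walks v c b)"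
  proof (rule inj_onI, clarsimp)
    fix c r1 r2 c' r1' r2'
    assume walks: "r1 \<in> walks u a c" "r2 \<in> walks v c b" "r1' \<in> walks u a c'" "r2' \<in> walks v c' b"
      and "r1 @ r2 = r1' @ r2'"
    moreover have "length r1 = length r1'" using walks walks_length_last by metis
    ultimately show "c = c' \<and> r1 = r1' \<and> r2 = r2'"
      using walks_length_last[OF walks(1)] walks_length_last[OF walks(3)] by simp
  qed
  then show ?thesis unfolding walks_append by (rule inj_on_image_eqpoll_self)
qed

lemma walks_Down_rev_eqpoll: "walks (map Down (rev ps)) a b \<approx> walks (map Up ps) b a"
proof (induction ps arbitrary: b)
  case (Cons p ps)
  have single: "walks [Down p] c b \<approx> walks [Up p] b c" for c
    by (cases "hstrip p b c") (simp_all add: singleton_eqpoll)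
  have "walks (map Down (rev (p # ps))) a b \<approx> (SIGMA c:UNIV. walks (map Down (rev ps)) a c \<times> walks [Down p] c b)"
    using walks_append_eqpoll[of "map Down (rev ps)" "[Down p]"] by simp
  also have "\<dots> \<approx> (SIGMA c:UNIV. walks [Up p] b c \<times> walks (map Up ps) c a)"
    by (rule Sigma_eqpoll_cong_id, rule eqpoll_trans[OF times_eqpoll_cong[OF Cons.IH single]])
      (rule times_commute_eqpoll)
  also have "\<dots> \<approx> walks (map Up (p # ps)) b a"
    using walks_append_eqpoll[of "[Up p]" "map Up ps"] by (simp add: eqpoll_sym)
  finally show ?case .
qed simp

lemma walks_Up_Up_commute:
  "(SIGMA m:UNIV. walks (map Up ps) m a \<times> walks (map Up qs) m b)
     \<approx> (SIGMA l:UNIV. walks (map Up qs) a l \<times> walks (map Up ps) b l)"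
proof -
  have "(SIGMA m:UNIV. walks (map Up ps) m a \<times> walks (map Up qs) m b)
      \<approx> (SIGMA m:UNIV. walks (map Down (rev ps)) a m \<times> walks (map Up qs) m b)"
    by (intro Sigma_eqpoll_cong_id times_eqpoll_cong eqpoll_sym[OF walks_Down_rev_eqpoll] eqpoll_refl)
  also have "\<dots> \<approx> walks (map Down (rev ps) @ map Up qs) a b"
    by (rule eqpoll_sym, rule walks_append_eqpoll)
  also have "\<dots> \<approx> walks (map Up qs @ map Down (rev ps)) a b"
    using walks_Downs_Ups_commute[of "[]" "rev ps" qs "[]"] by simp
  also have "\<dots> \<approx> (SIGMA l:UNIV. walks (map Up qs) a l \<times> walks (map Down (rev ps)) l b)"
    by (rule walks_append_eqpoll)
  also have "\<dots> \<approx> (SIGMA l:UNIV. walks (map Up qs) a l \<times> walks (map Up ps) b l)"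
    by (intro Sigma_eqpoll_cong_id times_eqpoll_cong walks_Down_rev_eqpoll eqpoll_refl)
  finally show ?thesis .
qed

definition entry :: "(box \<Rightarrow> 'a option) \<Rightarrow> int \<times> int \<Rightarrow> 'a" where
  "entry R p = the (R (box_proj k n p))"

definition semistandard :: "(int \<Rightarrow> int) \<Rightarrow> (int \<Rightarrow> int) \<Rightarrow> (box \<Rightarrow> ('a::linorder) option) \<Rightarrow> bool" where
  "semistandard l m R \<longleftrightarrow> dom R = skew_boxes k n l m \<and>
      (\<forall>x y1 y2. (x, y1) \<in> skew_points l m \<longrightarrow> (x, y2) \<in> skew_points l m \<longrightarrow> y1 < y2 \<longrightarrow>
          entry R (x, y1) \<le> entry R (x, y2)) \<and>
      (\<forall>x1 x2 y. (x1, y) \<in> skew_points l m \<longrightarrow> (x2, y) \<in> skew_points l m \<longrightarrow> x1 < x2 \<longrightarrow>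
          entry R (x1, y) < entry R (x2, y))"

lemma SSCT_iff: "T \<in> SSCT k n l m \<longleftrightarrow> (\<exists>R. T = (l, m, R) \<and> semistandard l m R)"
  unfolding SSCT_def semistandard_def entry_def by blast

lemma semistandard_dom: "semistandard l m R \<Longrightarrow> dom R = skew_boxes k n l m"
  unfolding semistandard_def by blast

lemma semistandard_None_iff: "semistandard l m R \<Longrightarrow> R b = None \<longleftrightarrow> b \<notin> skew_boxes k n l m"
  unfolding semistandard_def by blast

lemma semistandard_row:
  "semistandard l m R \<Longrightarrow> (x, y1) \<in> skew_points l m \<Longrightarrow> (x, y2) \<in> skew_points l m \<Longrightarrow> y1 < y2
    \<Longrightarrow> entry R (x, y1) \<le> entry R (x, y2)"
  unfolding semistandard_def by blast

lemma semistandard_column: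
  "semistandard l m R \<Longrightarrow> (x1, y) \<in> skew_points l m \<Longrightarrow> (x2, y) \<in> skew_points l m \<Longrightarrow> x1 < x2
    \<Longrightarrow> entry R (x1, y) < entry R (x2, y)"
  unfolding semistandard_def by blast

lemma semistandard_entry:
  assumes "semistandard l m R" "cylpar l" "cylpar m" "p \<in> skew_points l m"
  shows "R (box_proj k n p) = Some (entry R p)"
proof -
  have "box_proj k n p \<in> dom R"
    using assms(4) by (simp add: semistandard_dom[OF assms(1)] box_in_skew_boxes_iff[OF assms(2,3)])
  then show ?thesis unfolding entry_def by auto
qed

lemma entry_translate: "entry R (x + int k, y) = entry R (x, y + col_shift)"
proof -
  have "box_proj k n (x + int k, y) = box_proj k n (x, y + col_shift)"
    unfolding box_proj_eq_iff by (auto intro!: exI[of _ 1])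
  then show ?thesis unfolding entry_def by simp
qed

lemma wt_eq: "wt (l, m, R) c = card {b. R b = Some c}"
  unfolding wt_def by simp

lemma wt_pos_iff_ran:
  assumes "semistandard l m R" "cylpar l" "cylpar m"
  shows "0 < wt (l, m, R) c \<longleftrightarrow> c \<in> ran R"
proof -
  have "{b. R b = Some c} \<subseteq> dom R" by auto
  then have "finite {b. R b = Some c}"
    using finite_skew_boxes[OF assms(2,3)] semistandard_dom[OF assms(1)] finite_subset by auto
  then show ?thesis unfolding wt_eq ran_def by (auto simp: card_gt_0_iff)
qed

lemma finite_support_wt:
  assumes "semistandard l m R" "cylpar l" "cylpar m"
  shows "finite {c. wt (l, m, R) c \<noteq> 0}"
proof -
  have "finite (ran R)"
    using finite_skew_boxes[OF assms(2,3)] semistandard_dom[OF assms(1)] by (simp add: finite_ran)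
  moreover have "{c. wt (l, m, R) c \<noteq> 0} = ran R" using wt_pos_iff_ran[OF assms] by auto
  ultimately show ?thesis by simp
qed

definition tableaux_of_weight :: "(int \<Rightarrow> int) \<Rightarrow> (int \<Rightarrow> int) \<Rightarrow> ('a::linorder \<Rightarrow> nat) \<Rightarrow> 'a cyltab set" where
  "tableaux_of_weight l m w = {T \<in> SSCT k n l m. wt T = w}"

lemma tableaux_of_weight_iff:
  "T \<in> tableaux_of_weight l m w \<longleftrightarrow> (\<exists>R. T = (l, m, R) \<and> semistandard l m R \<and> wt (l, m, R) = w)"
  unfolding tableaux_of_weight_def SSCT_iff by auto

lemma semistandard_restrict:
  assumes R: "semistandard l m R" and cyl: "cylpar l" "cylpar v"
    and between: "\<forall>x. m x \<le> v x" "\<forall>x. v x \<le> l x"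
  shows "semistandard l v (R |` skew_boxes k n l v)"
proof -
  have outer: "p \<in> skew_points l m" if "p \<in> skew_points l v" for p
    using that skew_points_union[OF between] by blast
  have same_entry: "entry (R |` skew_boxes k n l v) p = entry R p" if "p \<in> skew_points l v" for p
    using that unfolding entry_def skew_boxes_def by simp
  have "dom (R |` skew_boxes k n l v) = skew_boxes k n l v"
    using semistandard_dom[OF R] skew_boxes_union[OF between] by auto
  then show ?thesis unfolding semistandard_def
    using semistandard_row[OF R outer outer] semistandard_column[OF R outer outer] same_entry
    by simp
qed

context
  fixes l m :: "int \<Rightarrow> int" and a :: "'a::linorder"
  assumes cyl_l: "cylpar l" and cyl_m: "cylpar m" and m_le_l: "\<forall>x. m x \<le> l x"
begin

text \<open>If all entries of R are at least a, the boxes with entry a form the horizontal strip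
  lower_shape R / m: in each row they are the leftmost boxes of the row.\<close>

definition lower_shape :: "(box \<Rightarrow> 'a option) \<Rightarrow> int \<Rightarrow> int" where
  "lower_shape R = (\<lambda>x. Max (insert (m x) {y. m x < y \<and> y \<le> l x \<and> entry R (x, y) \<le> a}))"

lemma lower_shape_bounds: "m x \<le> lower_shape R x" "lower_shape R x \<le> l x"
proof -
  have "finite (insert (m x) {y. m x < y \<and> y \<le> l x \<and> entry R (x, y) \<le> a})"
    by (rule finite_subset[of _ "{m x..l x}"]) (use m_le_l in auto)
  then show "m x \<le> lower_shape R x" "lower_shape R x \<le> l x"
    unfolding lower_shape_def using m_le_l by (auto simp: Max_le_iff)
qed

lemma entry_le_iff_lower_shape:
  assumes R: "semistandard l m R" and y: "m x < y" "y \<le> l x"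
  shows "entry R (x, y) \<le> a \<longleftrightarrow> y \<le> lower_shape R x"
proof
  let ?S = "insert (m x) {y. m x < y \<and> y \<le> l x \<and> entry R (x, y) \<le> a}"
  have fin: "finite ?S" by (rule finite_subset[of _ "{m x..l x}"]) (use m_le_l in auto)
  {
    assume "entry R (x, y) \<le> a"
    then show "y \<le> lower_shape R x" unfolding lower_shape_def using fin y by simp
  next
    assume y_le: "y \<le> lower_shape R x"
    have "Max ?S \<in> ?S" using fin by (intro Max_in) auto
    moreover have "Max ?S \<noteq> m x" using y y_le unfolding lower_shape_def by auto
    ultimately have top: "(x, Max ?S) \<in> skew_points l m" "entry R (x, Max ?S) \<le> a" by auto
    show "entry R (x, y) \<le> a"
    proof (cases "y = Max ?S")
      case False
      then have "y < Max ?S" using y_le unfolding lower_shape_def by simp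
      then show ?thesis using semistandard_row[OF R _ top(1)] y top(2) by fastforce
    qed (use top in simp)
  }
qed

lemma entry_ge_min:
  assumes "semistandard l m R" "\<forall>c\<in>ran R. a \<le> c" "p \<in> skew_points l m"
  shows "a \<le> entry R p"
  using semistandard_entry[OF assms(1) cyl_l cyl_m assms(3)] assms(2) by (auto simp: ran_def)

lemma lower_shape_interlaces:
  assumes R: "semistandard l m R" and min: "\<forall>c\<in>ran R. a \<le> c"
  shows "lower_shape R (x + 1) \<le> m x"
proof (rule ccontr)
  let ?y = "lower_shape R (x + 1)"
  assume "\<not> ?y \<le> m x"
  moreover have "m (x + 1) \<le> m x" "l (x + 1) \<le> l x" using cyl_m cyl_l cylpar_step by blast+
  moreover have "?y \<le> l (x + 1)" by (rule lower_shape_bounds)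
  ultimately have below: "(x, ?y) \<in> skew_points l m" and above: "(x + 1, ?y) \<in> skew_points l m"
    by auto
  have "entry R (x + 1, ?y) \<le> a" using entry_le_iff_lower_shape[OF R] above by simp
  moreover have "entry R (x, ?y) < entry R (x + 1, ?y)" by (rule semistandard_column[OF R below above]) simp
  moreover have "a \<le> entry R (x, ?y)" by (rule entry_ge_min[OF R min below])
  ultimately show False by simp
qed

lemma lower_shape_period:
  assumes R: "semistandard l m R"
  shows "lower_shape R (x + int k) = lower_shape R x - col_shift"
proof (rule threshold_unique[where P="\<lambda>y. entry R (x + int k, y) \<le> a"])
  show "m (x + int k) \<le> lower_shape R (x + int k)" "lower_shape R (x + int k) \<le> l (x + int k)"
    by (rule lower_shape_bounds)+
  show "m (x + int k) \<le> lower_shape R x - col_shift" "lower_shape R x - col_shift \<le> l (x + int k)"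
    using lower_shape_bounds[where R=R and x=x] cylpar_period[OF cyl_m] cylpar_period[OF cyl_l] by auto
  show "entry R (x + int k, y) \<le> a \<longleftrightarrow> y \<le> lower_shape R (x + int k)"
    if "m (x + int k) < y" "y \<le> l (x + int k)" for y
    using entry_le_iff_lower_shape[OF R that] .
  show "entry R (x + int k, y) \<le> a \<longleftrightarrow> y \<le> lower_shape R x - col_shift"
    if "m (x + int k) < y" "y \<le> l (x + int k)" for y
  proof -
    have "m x < y + col_shift" "y + col_shift \<le> l x"
      using that cylpar_period[OF cyl_m] cylpar_period[OF cyl_l] by auto
    then show ?thesis unfolding entry_translate using entry_le_iff_lower_shape[OF R] by fastforce
  qed
qed

lemma entry_eq_min_iff:
  assumes R: "semistandard l m R" and min: "\<forall>c\<in>ran R. a \<le> c"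
  shows "R b = Some a \<longleftrightarrow> b \<in> skew_boxes k n (lower_shape R) m"
proof
  assume "R b = Some a"
  then have "b \<in> skew_boxes k n l m" using semistandard_dom[OF R] by blast
  then obtain x y where xy: "(x, y) \<in> skew_points l m" "b = box_proj k n (x, y)"
    unfolding skew_boxes_def by auto
  then have "entry R (x, y) = a" using \<open>R b = Some a\<close> unfolding entry_def by simp
  then have "y \<le> lower_shape R x" using entry_le_iff_lower_shape[OF R] xy(1) by auto
  then show "b \<in> skew_boxes k n (lower_shape R) m" using xy unfolding skew_boxes_def by auto
next
  assume "b \<in> skew_boxes k n (lower_shape R) m"
  then obtain x y where xy: "(x, y) \<in> skew_points (lower_shape R) m" "b = box_proj k n (x, y)"
    unfolding skew_boxes_def by auto
  then have p: "(x, y) \<in> skew_points l m" using lower_shape_bounds(2)[where R=R and x=x] by auto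
  have "entry R (x, y) \<le> a" using entry_le_iff_lower_shape[OF R] xy(1) p by auto
  then have "entry R (x, y) = a" using entry_ge_min[OF R min p] by simp
  then show "R b = Some a" using semistandard_entry[OF R cyl_l cyl_m p] xy(2) by simp
qed

lemma cylpar_lower_shape:
  assumes R: "semistandard l m R" and min: "\<forall>c\<in>ran R. a \<le> c"
  shows "cylpar (lower_shape R)"
proof (rule cylparI)
  show "lower_shape R (x + 1) \<le> lower_shape R x" for x
    using lower_shape_interlaces[OF R min, of x] lower_shape_bounds(1)[where R=R and x=x] by simp
qed (rule lower_shape_period[OF R])

lemma hstrip_lower_shape:
  assumes R: "semistandard l m R" and min: "\<forall>c\<in>ran R. a \<le> c"
  shows "hstrip (wt (l, m, R) a) m (lower_shape R)"
proof -
  have "{b. R b = Some a} = skew_boxes k n (lower_shape R) m"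
    using entry_eq_min_iff[OF R min] by blast
  then show ?thesis unfolding hstrip_def interlaces_def wt_eq
    using cyl_m cylpar_lower_shape[OF R min] lower_shape_bounds(1) lower_shape_interlaces[OF R min] by auto
qed

lemma wt_restrict_lower_shape:
  assumes R: "semistandard l m R" and min: "\<forall>c\<in>ran R. a \<le> c"
  shows "wt (l, lower_shape R, R |` skew_boxes k n l (lower_shape R)) = (wt (l, m, R))(a := 0)"
proof
  fix c
  let ?S = "skew_boxes k n l (lower_shape R)"
  have between: "\<forall>x. m x \<le> lower_shape R x" "\<forall>x. lower_shape R x \<le> l x"
    using lower_shape_bounds by auto
  have cyl: "cylpar (lower_shape R)" by (rule cylpar_lower_shape[OF R min])
  have in_S: "b \<in> ?S" if "R b = Some c" "c \<noteq> a" for b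
  proof -
    have "b \<in> skew_boxes k n l m" using that semistandard_None_iff[OF R, of b] by auto
    moreover have "b \<notin> skew_boxes k n (lower_shape R) m" using that entry_eq_min_iff[OF R min, of b] by auto
    ultimately show ?thesis using skew_boxes_union[OF between] by blast
  qed
  have not_in_S: "b \<notin> ?S" if "R b = Some a" for b
    using that entry_eq_min_iff[OF R min] skew_boxes_disjoint[OF cyl_l cyl cyl_m] by blast
  have "{b. (R |` ?S) b = Some c} = (if c = a then {} else {b. R b = Some c})"
    using in_S not_in_S by (auto simp: restrict_map_def)
  then show "wt (l, lower_shape R, R |` ?S) c = ((wt (l, m, R))(a := 0)) c"
    by (simp add: wt_eq)
qed

context
  fixes v :: "int \<Rightarrow> int" and R' :: "box \<Rightarrow> 'a option" and p :: nat
  assumes strip: "hstrip p m v" and v_le_l: "\<forall>x. v x \<le> l x"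
    and R': "semistandard l v R'" and min': "\<forall>c\<in>ran R'. a < c"
begin

lemma cyl_v: "cylpar v" and m_le_v: "\<forall>x. m x \<le> v x" and v_interlaces: "v (x + 1) \<le> m x"
  using strip unfolding hstrip_def interlaces_def by blast+

lemma entry_fill_outer:
  assumes "q \<in> skew_points l v"
  shows "entry (fill (skew_boxes k n v m) a R') q = entry R' q" and "a < entry R' q"
proof -
  have "box_proj k n q \<in> skew_boxes k n l v"
    using assms box_in_skew_boxes_iff[OF cyl_l cyl_v] by blast
  then have "box_proj k n q \<notin> skew_boxes k n v m" using skew_boxes_disjoint[OF cyl_l cyl_v cyl_m] by blast
  then show "entry (fill (skew_boxes k n v m) a R') q = entry R' q" unfolding entry_def fill_def by simp
  show "a < entry R' q" using min' semistandard_entry[OF R' cyl_l cyl_v assms] by (auto simp: ran_def)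
qed

lemma entry_fill_strip:
  assumes "q \<in> skew_points v m"
  shows "entry (fill (skew_boxes k n v m) a R') q = a"
  using assms unfolding entry_def fill_def skew_boxes_def by simp

lemma semistandard_fill: "semistandard l m (fill (skew_boxes k n v m) a R')"
  unfolding semistandard_def
proof (intro conjI allI impI)
  let ?R = "fill (skew_boxes k n v m) a R'"
  show "dom ?R = skew_boxes k n l m"
    unfolding skew_boxes_union[OF m_le_v v_le_l] using semistandard_dom[OF R'] unfolding fill_def dom_def by auto
  fix x y1 y2 assume h: "(x, y1) \<in> skew_points l m" "(x, y2) \<in> skew_points l m" "y1 < y2"
  show "entry ?R (x, y1) \<le> entry ?R (x, y2)"
  proof (cases "y2 \<le> v x")
    case True then show ?thesis using h entry_fill_strip[of "(x, y1)"] entry_fill_strip[of "(x, y2)"] by auto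
  next
    case False
    then have outer2: "(x, y2) \<in> skew_points l v" using h by auto
    show ?thesis
    proof (cases "y1 \<le> v x")
      case True then show ?thesis using h entry_fill_strip[of "(x, y1)"] entry_fill_outer[OF outer2] by auto
    next
      case False
      then have outer1: "(x, y1) \<in> skew_points l v" using h by auto
      then show ?thesis using entry_fill_outer[OF outer1] entry_fill_outer[OF outer2]
          semistandard_row[OF R' outer1 outer2 h(3)] by simp
    qed
  qed
next
  let ?R = "fill (skew_boxes k n v m) a R'"
  fix x1 x2 y assume h: "(x1, y) \<in> skew_points l m" "(x2, y) \<in> skew_points l m" "x1 < x2"
  show "entry ?R (x1, y) < entry ?R (x2, y)"
  proof (cases "y \<le> v x2")
    case True
    have "v x2 \<le> v (x1 + 1)" using cylpar_antimono[OF cyl_v, of "x1 + 1" x2] h(3) by simp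
    then show ?thesis using True v_interlaces[of x1] h by simp
  next
    case False
    then have outer2: "(x2, y) \<in> skew_points l v" using h by auto
    show ?thesis
    proof (cases "y \<le> v x1")
      case True then show ?thesis using h entry_fill_strip[of "(x1, y)"] entry_fill_outer[OF outer2] by auto
    next
      case False
      then have outer1: "(x1, y) \<in> skew_points l v" using h by auto
      then show ?thesis using entry_fill_outer[OF outer1] entry_fill_outer[OF outer2]
          semistandard_column[OF R' outer1 outer2 h(3)] by simp
    qed
  qed
qed

lemma wt_fill: "wt (l, m, fill (skew_boxes k n v m) a R') = (wt (l, v, R'))(a := p)"
proof
  fix c
  have "a \<notin> ran R'" using min' by blast
  then have "{b. fill (skew_boxes k n v m) a R' b = Some c}
      = (if c = a then skew_boxes k n v m else {b. R' b = Some c})"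
    using semistandard_dom[OF R'] skew_boxes_disjoint[OF cyl_l cyl_v cyl_m]
    by (auto simp: fill_def ran_def)
  moreover have "card (skew_boxes k n v m) = p" using strip unfolding hstrip_def by blast
  ultimately show "wt (l, m, fill (skew_boxes k n v m) a R') c = ((wt (l, v, R'))(a := p)) c"
    by (simp add: wt_eq)
qed

lemma lower_shape_fill: "lower_shape (fill (skew_boxes k n v m) a R') = v"
proof
  fix x
  let ?R = "fill (skew_boxes k n v m) a R'"
  show "lower_shape ?R x = v x"
  proof (rule threshold_unique[where P="\<lambda>y. entry ?R (x, y) \<le> a"])
    show "m x \<le> lower_shape ?R x" "lower_shape ?R x \<le> l x" by (rule lower_shape_bounds)+
    show "m x \<le> v x" "v x \<le> l x" using m_le_v v_le_l by auto
    show "entry ?R (x, y) \<le> a \<longleftrightarrow> y \<le> lower_shape ?R x" if "m x < y" "y \<le> l x" for y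
      using entry_le_iff_lower_shape[OF semistandard_fill that] .
    show "entry ?R (x, y) \<le> a \<longleftrightarrow> y \<le> v x" if "m x < y" "y \<le> l x" for y
      using that entry_fill_strip[of "(x, y)"] entry_fill_outer[of "(x, y)"] by (cases "y \<le> v x") auto
  qed
qed

lemma restrict_fill: "fill (skew_boxes k n v m) a R' |` skew_boxes k n l v = R'"
proof
  fix b
  show "(fill (skew_boxes k n v m) a R' |` skew_boxes k n l v) b = R' b"
    using semistandard_None_iff[OF R', of b] skew_boxes_disjoint[OF cyl_l cyl_v cyl_m]
    by (cases "b \<in> skew_boxes k n l v") (auto simp: fill_def)
qed

end

lemma fill_restrict:
  assumes R: "semistandard l m R" and min: "\<forall>c\<in>ran R. a \<le> c"
  shows "fill (skew_boxes k n (lower_shape R) m) a (R |` skew_boxes k n l (lower_shape R)) = R"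
proof -
  have between: "\<forall>x. m x \<le> lower_shape R x" "\<forall>x. lower_shape R x \<le> l x"
    using lower_shape_bounds by auto
  show ?thesis
  proof
    fix b
    consider "b \<in> skew_boxes k n (lower_shape R) m" | "b \<in> skew_boxes k n l (lower_shape R)"
      | "b \<notin> skew_boxes k n l m"
      using skew_boxes_union[OF between] by blast
    then show "fill (skew_boxes k n (lower_shape R) m) a (R |` skew_boxes k n l (lower_shape R)) b = R b"
    proof cases
      case 1 then show ?thesis using entry_eq_min_iff[OF R min, of b] by (simp add: fill_def)
    next
      case 2 then show ?thesis
        using skew_boxes_disjoint[OF cyl_l cylpar_lower_shape[OF R min] cyl_m] by (auto simp: fill_def)
    next
      case 3 then show ?thesis
        using semistandard_None_iff[OF R, of b] skew_boxes_union[OF between] by (auto simp: fill_def)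
    qed
  qed
qed

lemma tableaux_of_weight_peel:
  assumes min: "\<forall>c. w c \<noteq> 0 \<longrightarrow> a \<le> c"
  shows "tableaux_of_weight l m w
    \<approx> (SIGMA v:{v. hstrip (w a) m v \<and> (\<forall>x. v x \<le> l x)}. tableaux_of_weight l v (w(a := 0)))"
  unfolding eqpoll_iff_bijections
proof (intro exI conjI ballI)
  let ?peel = "\<lambda>(_, _, R). (lower_shape R, (l, lower_shape R, R |` skew_boxes k n l (lower_shape R)))"
  let ?unpeel = "\<lambda>(v, _, _, R'). (l, m, fill (skew_boxes k n v m) a R')"
  fix T assume "T \<in> tableaux_of_weight l m w"
  then obtain R where T: "T = (l, m, R)" and R: "semistandard l m R" and wt: "wt (l, m, R) = w"
    unfolding tableaux_of_weight_iff by blast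
  have min_R: "\<forall>c\<in>ran R. a \<le> c" using min wt wt_pos_iff_ran[OF R cyl_l cyl_m] by fastforce
  have "\<forall>x. m x \<le> lower_shape R x" "\<forall>x. lower_shape R x \<le> l x"
    using lower_shape_bounds by auto
  note restricted = semistandard_restrict[OF R cyl_l cylpar_lower_shape[OF R min_R] this]
  then show "?peel T \<in> (SIGMA v:{v. hstrip (w a) m v \<and> (\<forall>x. v x \<le> l x)}. tableaux_of_weight l v (w(a := 0)))"
    using T hstrip_lower_shape[OF R min_R] lower_shape_bounds wt_restrict_lower_shape[OF R min_R] wt
    by (auto simp: tableaux_of_weight_iff)
  show "?unpeel (?peel T) = T" using T fill_restrict[OF R min_R] by simp
next
  let ?peel = "\<lambda>(_, _, R). (lower_shape R, (l, lower_shape R, R |` skew_boxes k n l (lower_shape R)))"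
  let ?unpeel = "\<lambda>(v, _, _, R'). (l, m, fill (skew_boxes k n v m) a R')"
  fix X
  assume "X \<in> (SIGMA v:{v. hstrip (w a) m v \<and> (\<forall>x. v x \<le> l x)}. tableaux_of_weight l v (w(a := 0)))"
  then obtain v T' where X: "X = (v, T')" and strip: "hstrip (w a) m v" "\<forall>x. v x \<le> l x"
    and "T' \<in> tableaux_of_weight l v (w(a := 0))"
    by blast
  then obtain R' where T': "T' = (l, v, R')" and R': "semistandard l v R'" and wt': "wt (l, v, R') = w(a := 0)"
    unfolding tableaux_of_weight_iff by blast
  have "cylpar v" using strip unfolding hstrip_def by blast
  have min': "\<forall>c\<in>ran R'. a < c"
  proof
    fix c assume "c \<in> ran R'"
    then have "0 < wt (l, v, R') c" using wt_pos_iff_ran[OF R' cyl_l \<open>cylpar v\<close>] by simp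
    then have "c \<noteq> a" "w c \<noteq> 0" using wt' by (auto split: if_splits)
    then show "a < c" using min[rule_format, of c] by (simp add: order.order_iff_strict)
  qed
  show "?unpeel X \<in> tableaux_of_weight l m w"
    using X T' semistandard_fill[OF strip R' min'] wt_fill[OF strip R' min'] wt'
    unfolding tableaux_of_weight_iff by auto
  show "?peel (?unpeel X) = X"
    using X T' lower_shape_fill[OF strip R' min'] restrict_fill[OF strip R' min'] by simp
qed

end

lemma tableaux_of_weight_zero:
  assumes "cylpar l" "cylpar m" "\<forall>x. m x \<le> l x"
  shows "tableaux_of_weight l m (\<lambda>_. 0) = (if m = l then {(l, l, Map.empty)} else {})"
proof -
  have "T = (l, l, Map.empty) \<and> m = l" if T_in: "T \<in> tableaux_of_weight l m (\<lambda>_. 0)" for T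
  proof -
    obtain R where T: "T = (l, m, R)" and R: "semistandard l m R" and "wt (l, m, R) = (\<lambda>_. 0)"
      using T_in unfolding tableaux_of_weight_iff by blast
    then have "ran R = {}" using wt_pos_iff_ran[OF R assms(1,2)] by auto
    then have "R b = None" for b by (cases "R b") (auto simp: ran_def)
    then have "R = Map.empty" by auto
    then have "skew_points l m = {}" using semistandard_dom[OF R] unfolding skew_boxes_def by simp
    then have "l x \<le> m x" for x using skew_points_iff[of x "l x" l m] by auto
    then have "m = l" using assms(3) by (auto intro: antisym)
    then show ?thesis using T \<open>R = Map.empty\<close> by simp
  qed
  moreover have "(l, l, Map.empty) \<in> tableaux_of_weight l l (\<lambda>_. 0 :: nat)"
    unfolding tableaux_of_weight_iff semistandard_def skew_boxes_def wt_def by auto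
  ultimately show ?thesis by auto
qed

lemma tableaux_of_weight_eqpoll_walks:
  assumes "sorted_wrt (<) as" "\<forall>c. w c \<noteq> 0 \<longrightarrow> c \<in> set as"
    and "cylpar l" "cylpar m" "cyl_subseteq m l"
  shows "tableaux_of_weight l m (w :: 'a::linorder \<Rightarrow> nat) \<approx> walks (map Up (map w as)) m l"
  using assms
proof (induction as arbitrary: m w)
  case Nil
  then have "w = (\<lambda>_. 0)" by auto
  moreover have "\<forall>x. m x \<le> l x" using Nil(5) unfolding cyl_subseteq_def .
  note zero = tableaux_of_weight_zero[OF Nil(3,4) this]
  show ?case unfolding \<open>w = (\<lambda>_. 0)\<close> zero by (simp add: singleton_eqpoll)
next
  case (Cons a as)
  let ?strips = "{v. hstrip (w a) m v \<and> (\<forall>x. v x \<le> l x)}"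
  have "a \<notin> set as" using Cons.prems(1) by auto
  then have map_eq: "map (w(a := 0)) as = map w as" by (auto intro: map_cong)
  have "\<forall>c. w c \<noteq> 0 \<longrightarrow> a \<le> c" using Cons.prems(1,2) by (auto intro: less_imp_le)
  then have "tableaux_of_weight l m w \<approx> (SIGMA v:?strips. tableaux_of_weight l v (w(a := 0)))"
    using Cons.prems(3-5) unfolding cyl_subseteq_def by (intro tableaux_of_weight_peel)
  also have "\<dots> \<approx> (SIGMA v:?strips. walks (map Up (map w as)) v l)"
  proof (rule Sigma_eqpoll_cong_id)
    fix v assume "v \<in> ?strips"
    then show "tableaux_of_weight l v (w(a := 0)) \<approx> walks (map Up (map w as)) v l"
      unfolding map_eq[symmetric] using Cons.prems
      by (intro Cons.IH) (auto simp: hstrip_def cyl_subseteq_def)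
  qed
  also have "(SIGMA v:?strips. walks (map Up (map w as)) v l)
      = (SIGMA v:{v. step_rel (Up (w a)) m v}. walks (map Up (map w as)) v l)"
    by (rule Sigma_cong_nonempty) (auto dest: walks_Up_subseteq simp del: map_map simp: cyl_subseteq_def)
  also have "\<dots> \<approx> walks (map Up (map w (a # as))) m l"
    by (rule eqpoll_sym) (simp only: list.map walks_Cons_eqpoll)
  finally show ?case .
qed

lemma finite_support_wt_SSCT:
  assumes "T \<in> SSCT k n l m" "cylpar l" "cylpar m"
  shows "finite {c. wt T c \<noteq> 0}"
  using assms finite_support_wt unfolding SSCT_iff by blast

lemma CRSK_domain_fibre_eqpoll:
  assumes "cylpar \<alpha>" "cylpar \<beta>" "sorted_wrt (<) as"
    and "\<forall>c. w1 c \<noteq> 0 \<longrightarrow> c \<in> set as" "\<forall>c. w2 c \<noteq> 0 \<longrightarrow> c \<in> set as"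
  shows "{x \<in> CRSK_domain k n \<alpha> \<beta>. tableau_pair_wt x = (w1, w2)}
    \<approx> (SIGMA m:UNIV. walks (map Up (map w1 as)) m \<alpha> \<times> walks (map Up (map w2 as)) m \<beta>)"
proof -
  let ?M = "{m. cylpar m \<and> cyl_subseteq m \<alpha> \<and> cyl_subseteq m \<beta>}"
  have "{x \<in> CRSK_domain k n \<alpha> \<beta>. tableau_pair_wt x = (w1, w2)}
      = (\<lambda>(m, T, U). ((T, U), m)) ` (SIGMA m:?M. tableaux_of_weight \<alpha> m w1 \<times> tableaux_of_weight \<beta> m w2)"
    unfolding CRSK_domain_def tableaux_of_weight_def tableau_pair_wt_def by force
  then have "{x \<in> CRSK_domain k n \<alpha> \<beta>. tableau_pair_wt x = (w1, w2)}
      \<approx> (SIGMA m:?M. tableaux_of_weight \<alpha> m w1 \<times> tableaux_of_weight \<beta> m w2)"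
    by (simp add: inj_on_image_eqpoll_self inj_on_def)
  also have "\<dots> \<approx> (SIGMA m:?M. walks (map Up (map w1 as)) m \<alpha> \<times> walks (map Up (map w2 as)) m \<beta>)"
    using assms by (intro Sigma_eqpoll_cong_id times_eqpoll_cong tableaux_of_weight_eqpoll_walks) auto
  also have "\<dots> = (SIGMA m:UNIV. walks (map Up (map w1 as)) m \<alpha> \<times> walks (map Up (map w2 as)) m \<beta>)"
    using assms(1) by (intro Sigma_cong_nonempty) (auto dest: walks_cylpar_iff walks_Up_subseteq simp del: map_map)
  finally show ?thesis .
qed

lemma CRSK_codomain_fibre_eqpoll:
  assumes "cylpar \<alpha>" "cylpar \<beta>" "sorted_wrt (<) as"
    and "\<forall>c. w1 c \<noteq> 0 \<longrightarrow> c \<in> set as" "\<forall>c. w2 c \<noteq> 0 \<longrightarrow> c \<in> set as"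
  shows "{x \<in> CRSK_codomain k n \<alpha> \<beta>. tableau_pair_wt x = (w1, w2)}
    \<approx> (SIGMA l:UNIV. walks (map Up (map w2 as)) \<alpha> l \<times> walks (map Up (map w1 as)) \<beta> l)"
proof -
  let ?L = "{l. cylpar l \<and> cyl_subseteq \<alpha> l \<and> cyl_subseteq \<beta> l}"
  have "{x \<in> CRSK_codomain k n \<alpha> \<beta>. tableau_pair_wt x = (w1, w2)}
      = (\<lambda>(l, Q, P). ((P, Q), l)) ` (SIGMA l:?L. tableaux_of_weight l \<alpha> w2 \<times> tableaux_of_weight l \<beta> w1)"
    unfolding CRSK_codomain_def tableaux_of_weight_def tableau_pair_wt_def by force
  then have "{x \<in> CRSK_codomain k n \<alpha> \<beta>. tableau_pair_wt x = (w1, w2)}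
      \<approx> (SIGMA l:?L. tableaux_of_weight l \<alpha> w2 \<times> tableaux_of_weight l \<beta> w1)"
    by (simp add: inj_on_image_eqpoll_self inj_on_def)
  also have "\<dots> \<approx> (SIGMA l:?L. walks (map Up (map w2 as)) \<alpha> l \<times> walks (map Up (map w1 as)) \<beta> l)"
    using assms by (intro Sigma_eqpoll_cong_id times_eqpoll_cong tableaux_of_weight_eqpoll_walks) auto
  also have "\<dots> = (SIGMA l:UNIV. walks (map Up (map w2 as)) \<alpha> l \<times> walks (map Up (map w1 as)) \<beta> l)"
    using assms(1) by (intro Sigma_cong_nonempty) (auto dest: walks_cylpar_iff walks_Up_subseteq simp del: map_map)
  finally show ?thesis .
qed

lemma CRSK_fibres_eqpoll:
  assumes "cylpar \<alpha>" "cylpar \<beta>"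
  shows "{x \<in> CRSK_domain k n \<alpha> \<beta>. tableau_pair_wt x = (w1, w2)}
    \<approx> {x \<in> CRSK_codomain k n \<alpha> \<beta>. tableau_pair_wt x = (w1, w2 :: 'a::linorder \<Rightarrow> nat)}"
proof (cases "finite {c. w1 c \<noteq> 0} \<and> finite {c. w2 c \<noteq> 0}")
  case True
  define as where "as = sorted_list_of_set ({c. w1 c \<noteq> 0} \<union> {c. w2 c \<noteq> 0})"
  have "sorted_wrt (<) as" "\<forall>c. w1 c \<noteq> 0 \<longrightarrow> c \<in> set as" "\<forall>c. w2 c \<noteq> 0 \<longrightarrow> c \<in> set as"
    unfolding as_def using True by (simp_all add: strict_sorted_list_of_set)
  note fibres = CRSK_domain_fibre_eqpoll[OF assms this] CRSK_codomain_fibre_eqpoll[OF assms this]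
  show ?thesis
    using eqpoll_trans[OF fibres(1) eqpoll_trans[OF walks_Up_Up_commute eqpoll_sym[OF fibres(2)]]] .
next
  case False
  have "{x \<in> CRSK_domain k n \<alpha> \<beta>. tableau_pair_wt x = (w1, w2)} = {}"
    using False assms finite_support_wt_SSCT unfolding CRSK_domain_def tableau_pair_wt_def by fastforce
  moreover have "{x \<in> CRSK_codomain k n \<alpha> \<beta>. tableau_pair_wt x = (w1, w2)} = {}"
    using False assms finite_support_wt_SSCT unfolding CRSK_codomain_def tableau_pair_wt_def by fastforce
  ultimately show ?thesis by (metis eqpoll_refl)
qed

end

theorem mainTheorem1:
  fixes k n :: nat and \<alpha> \<beta> :: "int \<Rightarrow> int"
  assumes "1 \<le> k" and "k < n"
    and "is_cylpar k n \<alpha>" and "is_cylpar k n \<beta>"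
  shows "\<exists>CRSK :: (('a::linorder) cyltab \<times> 'a cyltab) \<times> (int \<Rightarrow> int)
                    \<Rightarrow> ('a cyltab \<times> 'a cyltab) \<times> (int \<Rightarrow> int).
           bij_betw CRSK (CRSK_domain k n \<alpha> \<beta>) (CRSK_codomain k n \<alpha> \<beta>) \<and>
           (\<forall>T U mu P Q lam. ((T, U), mu) \<in> CRSK_domain k n \<alpha> \<beta> \<longrightarrow>
               CRSK ((T, U), mu) = ((P, Q), lam) \<longrightarrow> wt T = wt P \<and> wt U = wt Q)"
proof -
  interpret cylinder k n using assms(1) by unfold_locales simp
  have "{x \<in> CRSK_domain k n \<alpha> \<beta>. tableau_pair_wt x = w}
      \<approx> {x \<in> CRSK_codomain k n \<alpha> \<beta>. tableau_pair_wt x = (w :: ('a \<Rightarrow> nat) \<times> ('a \<Rightarrow> nat))}" for w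
    using CRSK_fibres_eqpoll[OF assms(3,4), of "fst w" "snd w"] by simp
  note fibres = this
  obtain CRSK :: "('a cyltab \<times> 'a cyltab) \<times> (int \<Rightarrow> int) \<Rightarrow> ('a cyltab \<times> 'a cyltab) \<times> (int \<Rightarrow> int)"
    where bij: "bij_betw CRSK (CRSK_domain k n \<alpha> \<beta>) (CRSK_codomain k n \<alpha> \<beta>)"
      and wt: "\<forall>x\<in>CRSK_domain k n \<alpha> \<beta>. tableau_pair_wt (CRSK x) = tableau_pair_wt x"
    using bij_betw_if_fibres_eqpoll[where f=tableau_pair_wt and g=tableau_pair_wt, OF fibres] by blast
  show ?thesis
  proof (rule exI[of _ CRSK], rule conjI[OF bij], intro allI impI)
    fix T U mu P Q lam
    assume "((T, U), mu) \<in> CRSK_domain k n \<alpha> \<beta>" "CRSK ((T, U), mu) = ((P, Q), lam)"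
    then have "tableau_pair_wt ((P, Q), lam) = tableau_pair_wt ((T, U), mu)" using wt by metis
    then show "wt T = wt P \<and> wt U = wt Q" unfolding tableau_pair_wt_def by simp
  qed
qed

end
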